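(* There is a universal constant $C>0$ and, for every positive integer $T$, a (randomized) forecasting algorithm for the $T$-step sequential binary prediction game such that against every (possibly adaptive and randomized) adversary, $\mathbb{E}[\mathsf{CalDist}(x,p)] \le C\sqrt{T}$, where $x$ is the sequence of outcomes and $p$ the sequence of predictions.
   Context: Sequential binary prediction game with horizon $T$: at each step $t \in [T]$, the adversary picks a bit $x_t \in \{0,1\}$ and simultaneously the forecaster picks a prediction $p_t \in [0,1]$; both may depend on all previous outcomes and predictions (and on their own randomness); then $x_t,p_t$ are revealed to both. For $x \in \{0,1\}^T$, let $\mathcal{C}(x) = \{q \in [0,1]^T : \sum_{t=1}^T (x_t - q_t)\mathbf{1}[q_t = \alpha] = 0 \text{ for all } \alpha \in [0,1]\}$, and $\mathsf{CalDist}(x,p) = \min_{q \in \mathcal{C}(x)} \|p - q\|_1$. The expectation is over the randomness of both players. *)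

theory Defs
  imports "HOL-Probability.Probability_Mass_Function"
begin

text \<open>Histories: the list of past (outcome, prediction) pairs, in order of time.\<close>
type_synonym history = "(bool \<times> real) list"

type_synonym forecaster = "history \<Rightarrow> real pmf"
type_synonym adversary = "history \<Rightarrow> bool pmf"

definition valid_forecaster :: "forecaster \<Rightarrow> bool" where
  "valid_forecaster F \<longleftrightarrow> (\<forall>h. set_pmf (F h) \<subseteq> {0..1})"

text \<open>The law of the full transcript after n rounds; in each round x_t and p_t are drawn
 simultaneously and independently given the history.\<close>
fun play :: "nat \<Rightarrow> adversary \<Rightarrow> forecaster \<Rightarrow> history pmf" where
  "play 0 A F = return_pmf []"
| "play (Suc n) A F =
     bind_pmf (play n A F) (\<lambda>h. bind_pmf (A h) (\<lambda>x. bind_pmf (F h) (\<lambda>p. return_pmf (h @ [(x, p)]))))"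

definition cal_set :: "bool list \<Rightarrow> real list set" where
  "cal_set x = {q. length q = length x \<and> set q \<subseteq> {0..1} \<and>
      (\<forall>\<alpha>::real. (\<Sum>t<length x. (if q ! t = \<alpha> then of_bool (x ! t) - q ! t else 0)) = 0)}"

definition caldist :: "bool list \<Rightarrow> real list \<Rightarrow> real" where
  "caldist x p = Inf ((\<lambda>q. \<Sum>t<length x. \<bar>p ! t - q ! t\<bar>) ` cal_set x)"

end

theory Submission
  imports Defs
begin

text \<open>The forecaster is deterministic and predicts on the grid of the points \<open>j/m\<close>,
  \<open>m \<approx> \<surd>T\<close>. Alongside its predictions it builds a shadow sequence \<open>q\<close> of grid values,
  fixed after each outcome, whose bias \<open>B(c) = \<Sum>{x\<^sub>t - c | q\<^sub>t = c}\<close> stays in \<open>[-1,1]\<close>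
  at every level \<open>c\<close>: it predicts the least grid point \<open>i/m\<close> with \<open>B(i/m) \<le> i/m\<close> and
  records \<open>q\<^sub>t = i/m\<close> if \<open>x\<^sub>t = 1\<close> and \<open>q\<^sub>t = (i-1)/m\<close> otherwise, where
  \<open>B((i-1)/m) > (i-1)/m\<close> by minimality. Each prediction is within \<open>1/m\<close> of the shadow
  value, and replacing every shadow value by the mean outcome on its level set gives a
  perfectly calibrated sequence at l1-distance \<open>\<Sum>\<^sub>c |B(c)| \<le> m + 1\<close>. Hence the distance
  to calibration is at most \<open>T/m + m + 1 \<le> 4\<surd>T\<close> on every play.\<close>

definition fiber_mean :: "('i \<Rightarrow> 'a) \<Rightarrow> ('i \<Rightarrow> real) \<Rightarrow> 'i set \<Rightarrow> 'a \<Rightarrow> real" where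
  "fiber_mean g y I c = (\<Sum>s\<in>{s\<in>I. g s = c}. y s) / card {s\<in>I. g s = c}"

lemma sum_fiberwise:
  assumes "finite I"
  shows "(\<Sum>t\<in>I. f (g t) t) = (\<Sum>c\<in>g ` I. \<Sum>t\<in>{s\<in>I. g s = c}. f c t)"
  using sum.image_gen[OF assms, of "\<lambda>t. f (g t) t" g] by (auto intro!: sum.cong)

lemma sum_fiber_deviation:
  fixes g :: "'i \<Rightarrow> 'a"
  assumes "finite I" "c \<in> g ` I"
  shows "(\<Sum>s\<in>{s\<in>I. g s = c}. a - y s) = card {s\<in>I. g s = c} * (a - fiber_mean g y I c)"
proof -
  have "card {s\<in>I. g s = c} \<noteq> 0"
    using assms by (auto simp: card_eq_0_iff)
  then show ?thesis
    by (simp add: fiber_mean_def sum_subtractf right_diff_distrib)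
qed

lemma fiber_mean_calibrated:
  assumes "finite I"
  shows "(\<Sum>t\<in>I. if fiber_mean g y I (g t) = \<alpha> then y t - fiber_mean g y I (g t) else 0) = 0"
proof -
  have "(\<Sum>t\<in>{s\<in>I. g s = c}. if fiber_mean g y I c = \<alpha> then y t - fiber_mean g y I c else 0) = 0"
    if "c \<in> g ` I" for c
  proof -
    have "(\<Sum>t\<in>{s\<in>I. g s = c}. fiber_mean g y I c - y t) = 0"
      using sum_fiber_deviation[OF assms that, of "fiber_mean g y I c" y] by simp
    then show ?thesis
      by (cases "fiber_mean g y I c = \<alpha>") (simp_all add: sum_subtractf)
  qed
  then show ?thesis
    by (simp add: sum_fiberwise[OF assms, where f = "\<lambda>c t. if fiber_mean g y I c = \<alpha>
      then y t - fiber_mean g y I c else 0"])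
qed

lemma sum_abs_dist_fiber_mean:
  fixes g :: "'i \<Rightarrow> real"
  assumes "finite I"
  shows "(\<Sum>t\<in>I. \<bar>g t - fiber_mean g y I (g t)\<bar>) = (\<Sum>c\<in>g ` I. \<bar>\<Sum>s\<in>{s\<in>I. g s = c}. y s - c\<bar>)"
proof -
  have "(\<Sum>t\<in>{s\<in>I. g s = c}. \<bar>c - fiber_mean g y I c\<bar>) = \<bar>\<Sum>s\<in>{s\<in>I. g s = c}. y s - c\<bar>"
    if "c \<in> g ` I" for c
  proof -
    have "(\<Sum>t\<in>{s\<in>I. g s = c}. \<bar>c - fiber_mean g y I c\<bar>) = \<bar>\<Sum>s\<in>{s\<in>I. g s = c}. c - y s\<bar>"
      using sum_fiber_deviation[OF assms that, of c y] by (simp add: abs_mult)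
    also have "\<dots> = \<bar>\<Sum>s\<in>{s\<in>I. g s = c}. y s - c\<bar>"
      by (simp add: sum_subtractf abs_minus_commute[of "sum y _"])
    finally show ?thesis .
  qed
  then show ?thesis
    by (simp add: sum_fiberwise[OF assms, where f = "\<lambda>c t. \<bar>c - fiber_mean g y I c\<bar>"])
qed

lemma fiber_mean_bounds:
  assumes "\<And>s. s \<in> I \<Longrightarrow> 0 \<le> y s \<and> y s \<le> 1"
  shows "0 \<le> fiber_mean g y I c \<and> fiber_mean g y I c \<le> 1"
proof -
  let ?F = "{s\<in>I. g s = c}"
  have "0 \<le> sum y ?F" "sum y ?F \<le> card ?F"
    using assms sum_bounded_above[of ?F y 1] by (auto intro: sum_nonneg)
  then show ?thesis
    by (cases "card ?F = 0") (auto simp: fiber_mean_def divide_le_eq_1)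
qed

definition bias :: "bool list \<Rightarrow> real list \<Rightarrow> real \<Rightarrow> real" where
  "bias x q c = (\<Sum>t<length q. if q ! t = c then of_bool (x ! t) - c else 0)"

lemma bias_eq_sum_level:
  "bias x q c = (\<Sum>t\<in>{t\<in>{..<length q}. q ! t = c}. of_bool (x ! t) - c)"
  unfolding bias_def by (rule sum.inter_filter[symmetric]) simp

lemma caldist_le:
  assumes "r \<in> cal_set x"
  shows "caldist x p \<le> (\<Sum>t<length x. \<bar>p ! t - r ! t\<bar>)"
  unfolding caldist_def
  by (rule cInf_lower) (use assms in \<open>auto intro!: bdd_belowI[of _ 0] sum_nonneg\<close>)

lemma caldist_le_dist_add_bias:
  assumes "length p = length x" "length q = length x"
  shows "caldist x p \<le> (\<Sum>t<length x. \<bar>p ! t - q ! t\<bar>) + (\<Sum>c\<in>set q. \<bar>bias x q c\<bar>)"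
proof -
  define y where "y t = (of_bool (x ! t) :: real)" for t
  define r where "r = map (\<lambda>t. fiber_mean ((!) q) y {..<length x} (q ! t)) [0..<length x]"
  have r_nth: "r ! t = fiber_mean ((!) q) y {..<length x} (q ! t)" if "t < length x" for t
    using that by (simp add: r_def)
  have "r \<in> cal_set x"
    unfolding cal_set_def
  proof (intro CollectI conjI allI)
    show "length r = length x"
      by (simp add: r_def)
    show "set r \<subseteq> {0..1}"
      using fiber_mean_bounds[of "{..<length x}" y "(!) q"] by (auto simp: r_def y_def)
    fix \<alpha> :: real
    have "(\<Sum>t<length x. if r ! t = \<alpha> then of_bool (x ! t) - r ! t else 0) =
      (\<Sum>t<length x. if fiber_mean ((!) q) y {..<length x} (q ! t) = \<alpha>
        then y t - fiber_mean ((!) q) y {..<length x} (q ! t) else 0)"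
      by (rule sum.cong) (simp_all add: r_nth y_def)
    then show "(\<Sum>t<length x. if r ! t = \<alpha> then of_bool (x ! t) - r ! t else 0) = 0"
      by (simp add: fiber_mean_calibrated)
  qed
  then have "caldist x p \<le> (\<Sum>t<length x. \<bar>p ! t - r ! t\<bar>)"
    by (rule caldist_le)
  also have "\<dots> \<le> (\<Sum>t<length x. \<bar>p ! t - q ! t\<bar> + \<bar>q ! t - r ! t\<bar>)"
    by (rule sum_mono) linarith
  also have "\<dots> = (\<Sum>t<length x. \<bar>p ! t - q ! t\<bar>) + (\<Sum>t<length x. \<bar>q ! t - r ! t\<bar>)"
    by (rule sum.distrib)
  also have "(\<Sum>t<length x. \<bar>q ! t - r ! t\<bar>) = (\<Sum>c\<in>set q. \<bar>bias x q c\<bar>)"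
  proof -
    have "set q = (!) q ` {..<length x}"
      using assms(2) by (auto simp: set_conv_nth)
    then show ?thesis
      using sum_abs_dist_fiber_mean[of "{..<length x}" "(!) q" y] assms(2)
      by (simp add: r_nth y_def bias_eq_sum_level)
  qed
  finally show ?thesis .
qed

definition grid :: "nat \<Rightarrow> nat \<Rightarrow> real" where
  "grid m j = real j / real m"

definition forecast_index :: "nat \<Rightarrow> bool list \<Rightarrow> real list \<Rightarrow> nat" where
  "forecast_index m x q = (LEAST i. bias x q (grid m i) \<le> grid m i)"

text \<open>For \<open>forecast_index m x q = 0\<close> and a false outcome, the truncated subtraction records
  the shadow value \<open>0\<close>, which leaves the bias at \<open>0\<close> unchanged.\<close>
definition shadow_next :: "nat \<Rightarrow> bool list \<Rightarrow> real list \<Rightarrow> bool \<Rightarrow> real" where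
  "shadow_next m x q b = grid m (if b then forecast_index m x q else forecast_index m x q - 1)"

primrec shadow :: "nat \<Rightarrow> bool list \<Rightarrow> nat \<Rightarrow> real list" where
  "shadow m x 0 = []"
| "shadow m x (Suc k) = shadow m x k @ [shadow_next m x (shadow m x k) (x ! k)]"

definition grid_forecaster :: "nat \<Rightarrow> forecaster" where
  "grid_forecaster m h =
     return_pmf (grid m (forecast_index m (map fst h) (shadow m (map fst h) (length h))))"

lemma grid_bounds: "j \<le> m \<Longrightarrow> 0 \<le> grid m j \<and> grid m j \<le> 1"
  unfolding grid_def by (cases "m = 0") auto

lemma bias_one_nonpos: "bias x q 1 \<le> 0"
  unfolding bias_def by (rule sum_nonpos) simp

lemma bias_snoc:
  "bias x (q @ [a]) c = bias x q c + (if a = c then of_bool (x ! length q) - c else 0)"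
  unfolding bias_def by (simp add: nth_append)

lemma forecast_index_le:
  assumes "0 < m"
  shows "forecast_index m x q \<le> m"
    and "bias x q (grid m (forecast_index m x q)) \<le> grid m (forecast_index m x q)"
proof -
  have "bias x q (grid m m) \<le> grid m m"
    using assms bias_one_nonpos[of x q] by (simp add: grid_def)
  then show "forecast_index m x q \<le> m"
    and "bias x q (grid m (forecast_index m x q)) \<le> grid m (forecast_index m x q)"
    unfolding forecast_index_def by (rule Least_le, rule LeastI)
qed

lemma bias_below_forecast_index:
  assumes "forecast_index m x q = Suc j"
  shows "grid m j < bias x q (grid m j)"
  using not_less_Least[of j "\<lambda>i. bias x q (grid m i) \<le> grid m i"] assms
  unfolding forecast_index_def by simp

lemma forecast_index_cong:
  assumes "\<And>s. s < length q \<Longrightarrow> x ! s = y ! s"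
  shows "forecast_index m x q = forecast_index m y q"
proof -
  have "bias x q = bias y q"
    using assms unfolding bias_def by (intro ext sum.cong) auto
  then show ?thesis
    unfolding forecast_index_def by simp
qed

lemma abs_bias_snoc_shadow_next_le:
  assumes "0 < m" and bounded: "\<And>c. \<bar>bias x q c\<bar> \<le> 1"
  shows "\<bar>bias x (q @ [shadow_next m x q (x ! length q)]) c\<bar> \<le> 1"
proof -
  let ?i = "forecast_index m x q"
  let ?a = "shadow_next m x q (x ! length q)"
  have "\<bar>bias x q ?a + of_bool (x ! length q) - ?a\<bar> \<le> 1"
  proof (cases "x ! length q")
    case True
    then have "?a = grid m ?i"
      by (simp add: shadow_next_def)
    then show ?thesis
      using True forecast_index_le[OF assms(1), of x q] grid_bounds[of ?i m] bounded[of ?a]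
      by (simp add: abs_le_iff)
  next
    case False
    show ?thesis
    proof (cases ?i)
      case 0
      then show ?thesis
        using False bounded[of ?a] by (simp add: shadow_next_def grid_def)
    next
      case (Suc j)
      then have "j \<le> m"
        using forecast_index_le(1)[OF assms(1), of x q] by simp
      then show ?thesis
        using False Suc bias_below_forecast_index[OF Suc] grid_bounds[of j m] bounded[of ?a]
        by (simp add: shadow_next_def)
    qed
  qed
  moreover have "bias x (q @ [?a]) c =
      (if ?a = c then bias x q ?a + of_bool (x ! length q) - ?a else bias x q c)"
    unfolding bias_snoc by auto
  ultimately show ?thesis
    using bounded[of c] by presburger
qed

lemma length_shadow [simp]: "length (shadow m x k) = k"
  by (induction k) auto

lemma abs_bias_shadow_le:
  assumes "0 < m"
  shows "\<bar>bias x (shadow m x k) c\<bar> \<le> 1"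
proof (induction k arbitrary: c)
  case 0
  then show ?case by (simp add: bias_def)
next
  case (Suc k)
  then show ?case
    using abs_bias_snoc_shadow_next_le[OF assms, of x "shadow m x k"] by simp
qed

lemma set_shadow_subset:
  assumes "0 < m"
  shows "set (shadow m x k) \<subseteq> grid m ` {..m}"
proof (induction k)
  case (Suc k)
  have "forecast_index m x (shadow m x k) \<le> m"
    by (rule forecast_index_le(1)[OF assms])
  then have "shadow_next m x (shadow m x k) (x ! k) \<in> grid m ` {..m}"
    unfolding shadow_next_def by (intro imageI) auto
  with Suc show ?case by simp
qed simp

lemma nth_shadow: "t < k \<Longrightarrow> shadow m x k ! t = shadow_next m x (shadow m x t) (x ! t)"
proof (induction k)
  case (Suc k)
  then show ?case by (cases "t = k") (simp_all add: nth_append)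
qed simp

lemma shadow_cong: "(\<And>s. s < k \<Longrightarrow> x ! s = y ! s) \<Longrightarrow> shadow m x k = shadow m y k"
proof (induction k)
  case (Suc k)
  then have "shadow m x k = shadow m y k" by simp
  with Suc.prems show ?case
    using forecast_index_cong[of "shadow m y k" x y m] by (simp add: shadow_next_def)
qed simp

lemma grid_forecaster_take:
  assumes "t \<le> length h"
  shows "grid_forecaster m (take t h) =
    return_pmf (grid m (forecast_index m (map fst h) (shadow m (map fst h) t)))"
proof -
  have "shadow m (take t (map fst h)) t = shadow m (map fst h) t"
    by (rule shadow_cong) simp
  moreover have "forecast_index m (take t (map fst h)) (shadow m (map fst h) t) =
      forecast_index m (map fst h) (shadow m (map fst h) t)"
    by (rule forecast_index_cong) simp
  ultimately show ?thesis
    using assms by (simp add: grid_forecaster_def take_map [symmetric] min_absorb2)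
qed

lemma dist_forecast_shadow_next_le:
  "\<bar>grid m (forecast_index m x q) - shadow_next m x q b\<bar> \<le> 1 / real m"
  unfolding shadow_next_def grid_def
  by (cases "forecast_index m x q") (auto simp: diff_divide_distrib [symmetric])

lemma valid_grid_forecaster: "0 < m \<Longrightarrow> valid_forecaster (grid_forecaster m)"
  unfolding valid_forecaster_def grid_forecaster_def
  using forecast_index_le(1) grid_bounds by auto

lemma set_pmf_play:
  assumes "h \<in> set_pmf (play n A F)"
  shows "length h = n \<and> (\<forall>t<n. snd (h ! t) \<in> set_pmf (F (take t h)))"
  using assms
proof (induction n arbitrary: h)
  case (Suc n)
  then obtain h0 x p where h0: "h0 \<in> set_pmf (play n A F)" and p: "p \<in> set_pmf (F h0)"
    and h: "h = h0 @ [(x, p)]"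
    by auto
  with Suc.IH[OF h0] show ?case
    by (auto simp: nth_append less_Suc_eq)
qed simp

lemma caldist_play_grid_forecaster_le:
  assumes "0 < m" and h: "h \<in> set_pmf (play T A (grid_forecaster m))"
  shows "caldist (map fst h) (map snd h) \<le> real T / real m + (real m + 1)"
proof -
  define x where "x = map fst h"
  define q where "q = shadow m x T"
  have len: "length h = T"
    using set_pmf_play[OF h] by simp
  have "\<bar>map snd h ! t - q ! t\<bar> \<le> 1 / real m" if "t < T" for t
  proof -
    have "snd (h ! t) \<in> set_pmf (grid_forecaster m (take t h))"
      using set_pmf_play[OF h] that by simp
    then have "map snd h ! t = grid m (forecast_index m x (shadow m x t))"
      using that len by (simp add: grid_forecaster_take x_def)
    moreover have "q ! t = shadow_next m x (shadow m x t) (x ! t)"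
      using that by (simp add: q_def nth_shadow)
    ultimately show ?thesis
      using dist_forecast_shadow_next_le by simp
  qed
  then have dist: "(\<Sum>t<T. \<bar>map snd h ! t - q ! t\<bar>) \<le> real T / real m"
    using sum_bounded_above[of "{..<T}" "\<lambda>t. \<bar>map snd h ! t - q ! t\<bar>" "1 / real m"] by simp
  have "(\<Sum>c\<in>set q. \<bar>bias x q c\<bar>) \<le> real (card (set q))"
    using sum_bounded_above[of "set q" "\<lambda>c. \<bar>bias x q c\<bar>" 1] abs_bias_shadow_le[OF assms(1)]
    by (simp add: q_def)
  also have "card (set q) \<le> card (grid m ` {..m})"
    using set_shadow_subset[OF assms(1)] by (simp add: q_def card_mono)
  also have "\<dots> \<le> m + 1"
    using card_image_le[of "{..m}" "grid m"] by simp
  finally have "(\<Sum>c\<in>set q. \<bar>bias x q c\<bar>) \<le> real m + 1"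
    by simp
  with dist show ?thesis
    using caldist_le_dist_add_bias[of "map snd h" x q] len by (simp add: x_def q_def)
qed

lemma pmf_expectation_le_const:
  fixes f :: "'a \<Rightarrow> real"
  assumes "0 \<le> c" and "\<And>x. x \<in> set_pmf p \<Longrightarrow> f x \<le> c"
  shows "measure_pmf.expectation p f \<le> c"
proof (cases "integrable (measure_pmf p) f")
  case True
  then show ?thesis
    using assms(2) by (intro measure_pmf.integral_le_const) (auto simp: AE_measure_pmf_iff)
next
  case False
  then show ?thesis
    using assms(1) by (simp add: not_integrable_integral_eq)
qed

lemma div_ceiling_sqrt_add_ceiling_sqrt_le:
  fixes T :: real
  assumes "1 \<le> T"
  shows "T / \<lceil>sqrt T\<rceil> + \<lceil>sqrt T\<rceil> + 1 \<le> 4 * sqrt T"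
proof -
  have "1 \<le> sqrt T"
    using assms by simp
  have "T / \<lceil>sqrt T\<rceil> \<le> T / sqrt T"
    using \<open>1 \<le> sqrt T\<close> assms by (intro divide_left_mono) auto
  also have "\<dots> = sqrt T"
    using assms by (simp add: real_div_sqrt)
  finally show ?thesis
    using \<open>1 \<le> sqrt T\<close> by linarith
qed

theorem theorem3:
  shows "\<exists>C>0. \<forall>T::nat. T > 0 \<longrightarrow>
    (\<exists>F. valid_forecaster F \<and>
      (\<forall>A::adversary. measure_pmf.expectation (play T A F)
          (\<lambda>h. caldist (map fst h) (map snd h)) \<le> C * sqrt (real T)))"
proof (intro exI[of _ 4] conjI allI impI)
  fix T :: nat
  assume "T > 0"
  define m where "m = nat \<lceil>sqrt (real T)\<rceil>"
  have "0 < m"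
    using \<open>T > 0\<close> by (simp add: m_def)
  have "real T / real m + (real m + 1) \<le> 4 * sqrt (real T)"
    using div_ceiling_sqrt_add_ceiling_sqrt_le[of "real T"] \<open>T > 0\<close> by (simp add: m_def)
  then have "measure_pmf.expectation (play T A (grid_forecaster m))
      (\<lambda>h. caldist (map fst h) (map snd h)) \<le> 4 * sqrt (real T)" for A
    using caldist_play_grid_forecaster_le[OF \<open>0 < m\<close>]
    by (intro pmf_expectation_le_const) (auto intro: order_trans)
  with valid_grid_forecaster[OF \<open>0 < m\<close>] show "\<exists>F. valid_forecaster F \<and>
      (\<forall>A::adversary. measure_pmf.expectation (play T A F)
          (\<lambda>h. caldist (map fst h) (map snd h)) \<le> 4 * sqrt (real T))"
    by blast
qed simp

end
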